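(* Let $s\in[\tfrac12,1)$ and let $U$ be the unique positive even solution of $(-\Delta)^sU+U-U^2=0$ in $\mathbb{R}$ with $U\to0$ at infinity. There is a positive constant $\mathfrak c_s$, depending on $\int_{\mathbb{R}}U^2$, such that as $|x|\to\infty$: \[ \int_{\mathbb{R}}U^2(|y|)U(|x-y|)\,dy=\mathfrak c_sU(|x|)(1+o(1)), \] \[ \int_{\mathbb{R}}U^2(|y|)|x-y|^{2s-1}\,dy=\mathfrak c_s|x|^{2s-1}(1+o(1)), \] \[ \int_{\mathbb{R}}U^2(|y|)\log|x-y|\,dy=\mathfrak c_s\log|x|(1+o(1)). \]
   Context: $(-\Delta)^s$ is the fractional Laplacian on $\mathbb{R}$ with Fourier symbol $|\xi|^{2s}$. It is known that $U(x)=\mathfrak b_s|x|^{-1-2s}(1+o(1))$ as $|x|\to\infty$ for some $\mathfrak b_s>0$. *)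

theory Defs
  imports "HOL-Analysis.Analysis" "HOL-Library.Landau_Symbols"
begin

definition fourier :: "(real \<Rightarrow> real) \<Rightarrow> real \<Rightarrow> complex" where
  "fourier f \<xi> = (LINT x|lborel. complex_of_real (f x) * cis (- (\<xi> * x)))"

text \<open>U solves (-Delta)^s U + U - U^2 = 0 on R, where (-Delta)^s is the Fourier
  multiplier with symbol |xi|^(2s): the equation is imposed on the Fourier side,
  for U and U^2 integrable (so that their Fourier transforms are defined).\<close>
definition frac_eq_solution :: "real \<Rightarrow> (real \<Rightarrow> real) \<Rightarrow> bool" where
  "frac_eq_solution s U \<longleftrightarrow>
     integrable lborel U \<and> integrable lborel (\<lambda>x. (U x)\<^sup>2) \<and>
     (\<forall>\<xi>. complex_of_real (\<bar>\<xi>\<bar> powr (2 * s)) * fourier U \<xi> + fourier U \<xi>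
            - fourier (\<lambda>x. (U x)\<^sup>2) \<xi> = 0)"

end

theory Submission
  imports Defs
begin

text \<open>
  With \<open>f = U\<^sup>2\<close>, each of the three integrals is a convolution \<open>\<integral> f(y) k(x - y) dy\<close> with a
  kernel \<open>k\<close> such that \<open>k(x - y) / k(x) \<rightarrow> 1\<close> as \<open>|x| \<rightarrow> \<infinity>\<close> for every fixed \<open>y\<close>. Dominated
  convergence then gives \<open>\<integral> f(y) k(x - y) dy \<sim> (\<integral> f) k(x)\<close>, so \<open>c = \<integral> U\<^sup>2\<close> works for all three.
  For \<open>k = |x|\<^bsup>2s-1\<^esup>\<close> and for the positive part of \<open>ln |x|\<close> the ratio is at most \<open>1 + |y|\<close>,
  which is integrable against \<open>U\<^sup>2\<close> because \<open>U\<^sup>2\<close> decays like \<open>|y|\<^bsup>-2-4s\<^esup>\<close>. For \<open>k = U\<close> the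
  power decay bounds \<open>U(x - y)/U(x)\<close> when \<open>|y| \<le> |x|/2\<close> and \<open>U(y)/U(x)\<close> otherwise. The negative
  part of the logarithm is locally integrable, so it only contributes \<open>O(1) = o(ln |x|)\<close>.
\<close>

section \<open>Dominated convergence for translates\<close>

lemma integral_dominated_convergence_at_infinity:
  fixes s :: "real \<Rightarrow> 'a \<Rightarrow> real" and f w :: "'a \<Rightarrow> real"
  assumes meas: "f \<in> borel_measurable M" "\<And>t. s t \<in> borel_measurable M" and w: "integrable M w"
    and lim: "\<And>x. ((\<lambda>t. s t x) \<longlongrightarrow> f x) at_infinity"
    and bound: "\<forall>\<^sub>F t in at_infinity. \<forall>x. norm (s t x) \<le> w x"
  shows "((\<lambda>t. integral\<^sup>L M (s t)) \<longlongrightarrow> integral\<^sup>L M f) at_infinity"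
proof -
  have "((\<lambda>t. integral\<^sup>L M (s t)) \<longlongrightarrow> integral\<^sup>L M f) at_top"
  proof (rule integral_dominated_convergence_at_top[OF meas w])
    show "AE x in M. ((\<lambda>t. s t x) \<longlongrightarrow> f x) at_top"
      using tendsto_mono[OF at_top_le_at_infinity lim] by simp
    show "\<forall>\<^sub>F t in at_top. AE x in M. norm (s t x) \<le> w x"
      using filter_leD[OF at_top_le_at_infinity bound] by (auto elim!: eventually_mono)
  qed
  moreover have "((\<lambda>t. integral\<^sup>L M (s (- t))) \<longlongrightarrow> integral\<^sup>L M f) at_top"
  proof (rule integral_dominated_convergence_at_top[OF meas(1) meas(2) w])
    have neg: "filterlim uminus at_infinity (at_top :: real filter)"
      using filterlim_mono[OF filterlim_uminus_at_bot_at_top at_bot_le_at_infinity order_refl] .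
    then show "AE x in M. ((\<lambda>t. s (- t) x) \<longlongrightarrow> f x) at_top"
      by (intro AE_I2 filterlim_compose[OF lim neg])
    have "\<forall>\<^sub>F t in at_bot. \<forall>x. norm (s t x) \<le> w x"
      using filter_leD[OF at_bot_le_at_infinity bound] .
    then have "\<forall>\<^sub>F t in at_top. \<forall>x. norm (s (- t) x) \<le> w x"
      by (simp add: eventually_at_bot_linorder eventually_at_top_linorder) (metis minus_le_iff)
    then show "\<forall>\<^sub>F t in at_top. AE x in M. norm (s (- t) x) \<le> w x"
      by (auto elim!: eventually_mono)
  qed
  then have "((\<lambda>t. integral\<^sup>L M (s t)) \<longlongrightarrow> integral\<^sup>L M f) at_bot"
    by (simp add: filterlim_at_bot_mirror)
  ultimately show ?thesis
    unfolding at_infinity_eq_at_top_bot by (simp add: filterlim_sup)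
qed

lemma integral_lborel_pos:
  fixes g :: "real \<Rightarrow> real"
  assumes g: "integrable lborel g" and pos: "\<And>x. 0 < g x"
  shows "0 < (LINT x|lborel. g x)"
proof -
  have "(LINT x|lborel. g x) \<noteq> 0"
  proof
    assume "(LINT x|lborel. g x) = 0"
    then have "AE x in lborel. g x = 0"
      using integral_nonneg_eq_0_iff_AE[OF g] pos by (simp add: less_imp_le)
    then have "ae_filter (lborel :: real measure) = bot"
      using pos by (simp add: trivial_limit_def less_le)
    then show False
      unfolding ae_filter_eq_bot_iff by simp
  qed
  moreover have "0 \<le> (LINT x|lborel. g x)"
    using pos by (simp add: less_imp_le)
  ultimately show ?thesis by simp
qed

lemma asymp_equiv_integral_shift:
  fixes f k w :: "real \<Rightarrow> real"
  assumes [measurable]: "f \<in> borel_measurable borel" "k \<in> borel_measurable borel"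
    and w: "integrable lborel w"
    and shift: "\<And>y. (\<lambda>t. k (t - y)) \<sim>[at_infinity] k"
    and nonzero: "\<forall>\<^sub>F t in at_infinity. k t \<noteq> 0"
    and dominated: "\<forall>\<^sub>F t in at_infinity. \<forall>y. \<bar>f y * (k (t - y) / k t)\<bar> \<le> w y"
    and mass: "(LINT y|lborel. f y) \<noteq> 0"
  shows "(\<lambda>t. LINT y|lborel. f y * k (t - y)) \<sim>[at_infinity] (\<lambda>t. (LINT y|lborel. f y) * k t)"
proof (rule asymp_equivI')
  have "((\<lambda>t. k (t - y) / k t) \<longlongrightarrow> 1) at_infinity" for y
    using nonzero by (intro asymp_equivD_strong[OF shift]) (auto elim: eventually_mono)
  from tendsto_mult[OF tendsto_const this]
  have pointwise: "((\<lambda>t. f y * (k (t - y) / k t)) \<longlongrightarrow> f y) at_infinity" for y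
    by (metis mult.right_neutral)
  have "((\<lambda>t. LINT y|lborel. f y * (k (t - y) / k t)) \<longlongrightarrow> (LINT y|lborel. f y)) at_infinity"
    by (rule integral_dominated_convergence_at_infinity[where s = "\<lambda>t y. f y * (k (t - y) / k t)", OF _ _ w pointwise])
      (use dominated in auto)
  from tendsto_divide[OF this tendsto_const mass]
  have "((\<lambda>t. (LINT y|lborel. f y * (k (t - y) / k t)) / (LINT y|lborel. f y)) \<longlongrightarrow> 1) at_infinity"
    using mass by simp
  moreover have "(LINT y|lborel. f y * (k (t - y) / k t)) / (LINT y|lborel. f y)
      = (LINT y|lborel. f y * k (t - y)) / ((LINT y|lborel. f y) * k t)" for t
    by (simp only: times_divide_eq_right integral_divide_zero divide_divide_eq_left mult.commute)
  ultimately show "((\<lambda>t. (LINT y|lborel. f y * k (t - y)) / ((LINT y|lborel. f y) * k t)) \<longlongrightarrow> 1) at_infinity"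
    by (simp add: mult.commute)
qed

lemma asymp_equiv_integral_shift_moment:
  fixes f k :: "real \<Rightarrow> real"
  assumes [measurable]: "f \<in> borel_measurable borel" "k \<in> borel_measurable borel"
    and f: "integrable lborel f" and moment: "integrable lborel (\<lambda>y. \<bar>y\<bar> * f y)"
    and shift: "\<And>y. (\<lambda>t. k (t - y)) \<sim>[at_infinity] k"
    and nonzero: "\<forall>\<^sub>F t in at_infinity. k t \<noteq> 0"
    and growth: "\<forall>\<^sub>F t in at_infinity. \<forall>y. \<bar>k (t - y) / k t\<bar> \<le> 1 + \<bar>y\<bar>"
    and mass: "(LINT y|lborel. f y) \<noteq> 0"
  shows "(\<lambda>t. LINT y|lborel. f y * k (t - y)) \<sim>[at_infinity] (\<lambda>t. (LINT y|lborel. f y) * k t)"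
proof (rule asymp_equiv_integral_shift[OF _ _ _ shift nonzero _ mass])
  show "integrable lborel (\<lambda>y. \<bar>f y\<bar> + \<bar>\<bar>y\<bar> * f y\<bar>)"
    using f moment by (intro Bochner_Integration.integrable_add integrable_abs)
  show "\<forall>\<^sub>F t in at_infinity. \<forall>y. \<bar>f y * (k (t - y) / k t)\<bar> \<le> \<bar>f y\<bar> + \<bar>\<bar>y\<bar> * f y\<bar>"
    using growth
  proof eventually_elim
    case (elim t)
    have "\<bar>f y\<bar> * \<bar>k (t - y) / k t\<bar> \<le> \<bar>f y\<bar> * (1 + \<bar>y\<bar>)" for y
      using elim by (intro mult_left_mono) auto
    then show ?case by (simp add: abs_mult algebra_simps)
  qed
qed measurable

section \<open>Power kernels\<close>

lemma tendsto_abs_diff_ratio: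
  fixes y :: real
  shows "((\<lambda>t. \<bar>t - y\<bar> / \<bar>t\<bar>) \<longlongrightarrow> 1) at_infinity"
proof -
  have "((\<lambda>t. \<bar>1 - y * inverse t\<bar>) \<longlongrightarrow> \<bar>1 - y * 0\<bar>) at_infinity"
    by (intro tendsto_rabs tendsto_diff tendsto_mult tendsto_const tendsto_inverse_0)
  moreover have "\<forall>\<^sub>F t in at_infinity. \<bar>1 - y * inverse t\<bar> = \<bar>t - y\<bar> / \<bar>t\<bar>"
    unfolding eventually_at_infinity
  proof (intro exI[of _ 1] allI impI)
    fix t :: real
    assume "1 \<le> norm t"
    then have "1 - y * inverse t = (t - y) / t"
      by (auto simp: field_simps)
    then show "\<bar>1 - y * inverse t\<bar> = \<bar>t - y\<bar> / \<bar>t\<bar>"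
      by simp
  qed
  ultimately show ?thesis
    using Lim_transform_eventually by fastforce
qed

lemma asymp_equiv_abs_diff_powr:
  fixes y q :: real
  shows "(\<lambda>t. \<bar>t - y\<bar> powr q) \<sim>[at_infinity] (\<lambda>t. \<bar>t\<bar> powr q)"
proof (rule asymp_equivI')
  have "((\<lambda>t. (\<bar>t - y\<bar> / \<bar>t\<bar>) powr q) \<longlongrightarrow> 1 powr q) at_infinity"
    by (intro tendsto_powr tendsto_abs_diff_ratio tendsto_const) simp
  then show "((\<lambda>t. \<bar>t - y\<bar> powr q / \<bar>t\<bar> powr q) \<longlongrightarrow> 1) at_infinity"
    by (simp add: powr_divide)
qed

lemma abs_diff_powr_ratio_le:
  fixes t y a :: real
  assumes "1 \<le> \<bar>t\<bar>" "0 \<le> a" "a \<le> 1"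
  shows "\<bar>t - y\<bar> powr a / \<bar>t\<bar> powr a \<le> 1 + \<bar>y\<bar>"
proof -
  have "\<bar>t - y\<bar> \<le> \<bar>t\<bar> * (1 + \<bar>y\<bar>)"
    using assms mult_right_mono[of 1 "\<bar>t\<bar>" "\<bar>y\<bar>"] by (simp add: algebra_simps)
  then have "\<bar>t - y\<bar> powr a \<le> \<bar>t\<bar> powr a * (1 + \<bar>y\<bar>) powr a"
    using assms(2) by (subst powr_mult[symmetric]) (auto intro: powr_mono2)
  also have "\<dots> \<le> \<bar>t\<bar> powr a * (1 + \<bar>y\<bar>)"
    using assms powr_mono[of a 1 "1 + \<bar>y\<bar>"] by (intro mult_left_mono) auto
  finally show ?thesis
    using assms by (simp add: divide_le_eq mult.commute)
qed

lemma asymp_equiv_integral_powr_shift: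
  fixes f :: "real \<Rightarrow> real" and a :: real
  assumes [measurable]: "f \<in> borel_measurable borel"
    and f: "integrable lborel f" and moment: "integrable lborel (\<lambda>y. \<bar>y\<bar> * f y)"
    and a: "0 \<le> a" "a \<le> 1"
    and mass: "(LINT y|lborel. f y) \<noteq> 0"
  shows "(\<lambda>t. LINT y|lborel. f y * \<bar>t - y\<bar> powr a) \<sim>[at_infinity] (\<lambda>t. (LINT y|lborel. f y) * \<bar>t\<bar> powr a)"
proof (rule asymp_equiv_integral_shift_moment[OF _ _ f moment asymp_equiv_abs_diff_powr _ _ mass])
  have large: "\<forall>\<^sub>F t in at_infinity. 1 \<le> \<bar>t::real\<bar>"
    by (rule eventually_at_infinity[THEN iffD2]) auto
  then show "\<forall>\<^sub>F t in at_infinity. \<bar>t\<bar> powr a \<noteq> 0"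
    by eventually_elim simp
  show "\<forall>\<^sub>F t in at_infinity. \<forall>y. \<bar>\<bar>t - y\<bar> powr a / \<bar>t\<bar> powr a\<bar> \<le> 1 + \<bar>y\<bar>"
    using large by eventually_elim (simp add: abs_diff_powr_ratio_le a)
qed simp_all

section \<open>The logarithmic kernel\<close>

lemma filterlim_ln_abs_at_infinity: "filterlim (\<lambda>t::real. ln \<bar>t\<bar>) at_top at_infinity"
  using filterlim_compose[OF ln_at_top filterlim_norm_at_top[where 'a = real]] by simp

lemma eventually_one_le_ln_abs: "\<forall>\<^sub>F t in at_infinity. 1 \<le> ln \<bar>t::real\<bar> \<and> 1 \<le> \<bar>t\<bar>"
proof -
  have "\<forall>\<^sub>F t in at_infinity. 1 \<le> ln \<bar>t::real\<bar>"
    using filterlim_ln_abs_at_infinity unfolding filterlim_at_top by blast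
  then show ?thesis
  proof eventually_elim
    case (elim t)
    then have "t \<noteq> 0" by auto
    then have "1 \<le> \<bar>t\<bar>"
      using elim by (intro ln_ge_zero_imp_ge_one) (linarith, simp)
    with elim show ?case by simp
  qed
qed

lemma asymp_equiv_ln_abs_diff:
  fixes y :: real
  shows "(\<lambda>t. ln \<bar>t - y\<bar>) \<sim>[at_infinity] (\<lambda>t. ln \<bar>t\<bar>)"
proof (rule asymp_equivI')
  have "((\<lambda>t. 1 + ln (\<bar>t - y\<bar> / \<bar>t\<bar>) * inverse (ln \<bar>t\<bar>)) \<longlongrightarrow> 1 + ln 1 * 0) at_infinity"
    by (intro tendsto_add tendsto_const tendsto_mult tendsto_ln tendsto_abs_diff_ratio
        tendsto_inverse_0_at_top[OF filterlim_ln_abs_at_infinity]) simp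
  moreover have "\<forall>\<^sub>F t in at_infinity. 1 + ln (\<bar>t - y\<bar> / \<bar>t\<bar>) * inverse (ln \<bar>t\<bar>) = ln \<bar>t - y\<bar> / ln \<bar>t\<bar>"
    unfolding eventually_at_infinity
  proof (intro exI[of _ "\<bar>y\<bar> + 2"] allI impI)
    fix t :: real
    assume "\<bar>y\<bar> + 2 \<le> norm t"
    then have "\<bar>t\<bar> > 1" "\<bar>t - y\<bar> > 0" by auto
    then show "1 + ln (\<bar>t - y\<bar> / \<bar>t\<bar>) * inverse (ln \<bar>t\<bar>) = ln \<bar>t - y\<bar> / ln \<bar>t\<bar>"
      by (simp add: ln_div field_simps)
  qed
  ultimately show "((\<lambda>t. ln \<bar>t - y\<bar> / ln \<bar>t\<bar>) \<longlongrightarrow> 1) at_infinity"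
    using Lim_transform_eventually by fastforce
qed

lemma max_ln_abs_diff_le:
  fixes t y :: real
  assumes "1 \<le> \<bar>t\<bar>"
  shows "max (ln \<bar>t - y\<bar>) 0 \<le> ln \<bar>t\<bar> + \<bar>y\<bar>"
proof (cases "\<bar>t - y\<bar> \<le> 1")
  case True
  then have "ln \<bar>t - y\<bar> \<le> 0" by (cases "t = y") auto
  then show ?thesis using assms by simp
next
  case False
  have "\<bar>t - y\<bar> \<le> \<bar>t\<bar> * (1 + \<bar>y\<bar>)"
    using assms mult_right_mono[of 1 "\<bar>t\<bar>" "\<bar>y\<bar>"] by (simp add: algebra_simps)
  then have "ln \<bar>t - y\<bar> \<le> ln (\<bar>t\<bar> * (1 + \<bar>y\<bar>))"
    using False by simp
  also have "\<dots> = ln \<bar>t\<bar> + ln (1 + \<bar>y\<bar>)"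
    using assms by (subst ln_mult) auto
  also have "ln (1 + \<bar>y\<bar>) \<le> \<bar>y\<bar>" by (rule ln_add_one_self_le_self) simp
  finally show ?thesis using assms by simp
qed

lemma integrable_min_ln_abs: "integrable lborel (\<lambda>x::real. min (ln \<bar>x\<bar>) 0)"
proof -
  define g where "g t = indicator {0<..1} t * t powr (-1/2)" for t :: real
  have "(\<lambda>t::real. t powr (-1/2)) absolutely_integrable_on {0<..1}"
    by (rule nonnegative_absolutely_integrable_1[OF integrable_on_powr_from_0']) auto
  then have g: "integrable lborel g"
    unfolding g_def set_integrable_def by (subst (asm) integrable_completion) auto
  have "integrable lborel (\<lambda>x. g (0 + (-1) * x))"
    by (rule lborel_integrable_real_affine[OF g]) simp
  with g have "integrable lborel (\<lambda>x. 2 * (g x + g (- x)))"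
    by simp
  then show ?thesis
  proof (rule Bochner_Integration.integrable_bound)
    show "AE x in lborel. norm (min (ln \<bar>x\<bar>) 0) \<le> norm (2 * (g x + g (- x)))"
    proof (rule AE_I2)
      fix x :: real
      have "\<bar>min (ln \<bar>x\<bar>) 0\<bar> \<le> 2 * (g x + g (- x))"
      proof (cases "0 < \<bar>x\<bar> \<and> \<bar>x\<bar> \<le> 1")
        case True
        \<comment> \<open>\<open>ln u \<le> u - 1\<close> applied to \<open>u = \<bar>x\<bar> powr (-1/2)\<close>\<close>
        have "ln (\<bar>x\<bar> powr (-1/2)) \<le> \<bar>x\<bar> powr (-1/2) - 1"
          using True by (intro ln_le_minus_one) simp
        then have "\<bar>min (ln \<bar>x\<bar>) 0\<bar> \<le> 2 * \<bar>x\<bar> powr (-1/2)"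
          using True by (simp add: ln_powr)
        then show ?thesis
          using True by (cases "x > 0") (auto simp: g_def indicator_def)
      qed (auto simp: g_def indicator_def)
      then show "norm (min (ln \<bar>x\<bar>) 0) \<le> norm (2 * (g x + g (- x)))"
        by (simp add: g_def indicator_def)
    qed
  qed simp
qed

lemma asymp_equiv_integral_max_ln_shift:
  fixes f :: "real \<Rightarrow> real"
  assumes [measurable]: "f \<in> borel_measurable borel"
    and f: "integrable lborel f" and moment: "integrable lborel (\<lambda>y. \<bar>y\<bar> * f y)"
    and mass: "(LINT y|lborel. f y) \<noteq> 0"
  shows "(\<lambda>t. LINT y|lborel. f y * max (ln \<bar>t - y\<bar>) 0) \<sim>[at_infinity] (\<lambda>t. (LINT y|lborel. f y) * ln \<bar>t\<bar>)"
proof -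
  have max_ln_eq: "\<forall>\<^sub>F t in at_infinity. max (ln \<bar>t - y\<bar>) 0 = ln \<bar>t - y\<bar>" for y :: real
    unfolding eventually_at_infinity
  proof (intro exI[of _ "\<bar>y\<bar> + 1"] allI impI)
    fix t :: real
    assume "\<bar>y\<bar> + 1 \<le> norm t"
    then show "max (ln \<bar>t - y\<bar>) 0 = ln \<bar>t - y\<bar>" by simp
  qed
  have "(\<lambda>t. LINT y|lborel. f y * max (ln \<bar>t - y\<bar>) 0) \<sim>[at_infinity] (\<lambda>t. (LINT y|lborel. f y) * max (ln \<bar>t\<bar>) 0)"
  proof (rule asymp_equiv_integral_shift_moment[OF _ _ f moment _ _ _ mass])
    show "(\<lambda>t. max (ln \<bar>t - y\<bar>) 0) \<sim>[at_infinity] (\<lambda>t. max (ln \<bar>t\<bar>) 0)" for y :: real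
      using asymp_equiv_cong[OF max_ln_eq[of y] max_ln_eq[of 0]] asymp_equiv_ln_abs_diff by simp
    show "\<forall>\<^sub>F t in at_infinity. max (ln \<bar>t::real\<bar>) 0 \<noteq> 0"
      using eventually_one_le_ln_abs by eventually_elim simp
    show "\<forall>\<^sub>F t in at_infinity. \<forall>y. \<bar>max (ln \<bar>t - y::real\<bar>) 0 / max (ln \<bar>t\<bar>) 0\<bar> \<le> 1 + \<bar>y\<bar>"
      using eventually_one_le_ln_abs
    proof (eventually_elim, intro allI)
      case (elim t)
      fix y
      have "max (ln \<bar>t - y\<bar>) 0 \<le> ln \<bar>t\<bar> * (1 + \<bar>y\<bar>)"
        using max_ln_abs_diff_le[of t y] elim mult_left_mono[of 1 "ln \<bar>t\<bar>" "\<bar>y\<bar>"]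
        by (simp add: algebra_simps)
      then show "\<bar>max (ln \<bar>t - y\<bar>) 0 / max (ln \<bar>t\<bar>) 0\<bar> \<le> 1 + \<bar>y\<bar>"
        using elim by (simp add: divide_le_eq mult.commute)
    qed
  qed (measurable, measurable)
  also have "(\<lambda>t. (LINT y|lborel. f y) * max (ln \<bar>t\<bar>) 0) \<sim>[at_infinity] (\<lambda>t. (LINT y|lborel. f y) * ln \<bar>t\<bar>)"
    using max_ln_eq[of 0] by (intro asymp_equiv_refl_ev) (auto elim: eventually_mono)
  finally show ?thesis .
qed

lemma integrable_mult_max_ln_shift:
  fixes f :: "real \<Rightarrow> real" and t :: real
  assumes [measurable]: "f \<in> borel_measurable borel"
    and f: "integrable lborel f" and moment: "integrable lborel (\<lambda>y. \<bar>y\<bar> * f y)"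
    and t: "1 \<le> \<bar>t\<bar>"
  shows "integrable lborel (\<lambda>y. f y * max (ln \<bar>t - y\<bar>) 0)"
proof (rule Bochner_Integration.integrable_bound)
  show "integrable lborel (\<lambda>y. ln \<bar>t\<bar> * \<bar>f y\<bar> + \<bar>\<bar>y\<bar> * f y\<bar>)"
    using f moment by (intro Bochner_Integration.integrable_add integrable_mult_right integrable_abs)
  have "\<bar>f y\<bar> * max (ln \<bar>t - y\<bar>) 0 \<le> \<bar>f y\<bar> * (ln \<bar>t\<bar> + \<bar>y\<bar>)" for y
    by (intro mult_left_mono max_ln_abs_diff_le t) simp
  moreover have "0 \<le> ln \<bar>t\<bar>"
    using t by simp
  ultimately show "AE y in lborel. norm (f y * max (ln \<bar>t - y\<bar>) 0) \<le> norm (ln \<bar>t\<bar> * \<bar>f y\<bar> + \<bar>\<bar>y\<bar> * f y\<bar>)"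
    by (intro AE_I2) (simp add: abs_mult algebra_simps)
qed measurable

lemma integrable_mult_min_ln_shift:
  fixes f :: "real \<Rightarrow> real" and B t :: real
  assumes [measurable]: "f \<in> borel_measurable borel" and bounded: "\<And>y. \<bar>f y\<bar> \<le> B"
  shows "integrable lborel (\<lambda>y. f y * min (ln \<bar>t - y\<bar>) 0)"
proof (rule Bochner_Integration.integrable_bound)
  show "integrable lborel (\<lambda>y. B * \<bar>min (ln \<bar>t - y\<bar>) 0\<bar>)"
    using lborel_integrable_real_affine[OF integrable_min_ln_abs, of "-1" t] by simp
  have "0 \<le> B"
    using bounded[of 0] by simp
  moreover have "\<bar>f y * min (ln \<bar>t - y\<bar>) 0\<bar> \<le> B * \<bar>min (ln \<bar>t - y\<bar>) 0\<bar>" for y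
    unfolding abs_mult by (rule mult_right_mono) (use bounded in auto)
  ultimately show "AE y in lborel. norm (f y * min (ln \<bar>t - y\<bar>) 0) \<le> norm (B * \<bar>min (ln \<bar>t - y\<bar>) 0\<bar>)"
    by (intro AE_I2) (metis abs_abs abs_mult abs_of_nonneg real_norm_def)
qed measurable

lemma abs_integral_mult_min_ln_shift_le:
  fixes f :: "real \<Rightarrow> real" and B t :: real
  assumes [measurable]: "f \<in> borel_measurable borel" and bounded: "\<And>y. \<bar>f y\<bar> \<le> B"
  shows "\<bar>LINT y|lborel. f y * min (ln \<bar>t - y\<bar>) 0\<bar> \<le> B * (LINT x|lborel. \<bar>min (ln \<bar>x\<bar>) 0\<bar>)"
proof -
  have "\<bar>f y * min (ln \<bar>t - y\<bar>) 0\<bar> \<le> B * \<bar>min (ln \<bar>t - y\<bar>) 0\<bar>" for y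
    unfolding abs_mult by (rule mult_right_mono) (use bounded in auto)
  then have "\<bar>LINT y|lborel. f y * min (ln \<bar>t - y\<bar>) 0\<bar> \<le> (LINT y|lborel. B * \<bar>min (ln \<bar>t - y\<bar>) 0\<bar>)"
    using integrable_mult_min_ln_shift[OF assms(1) bounded, where t = t]
      lborel_integrable_real_affine[OF integrable_min_ln_abs, of "-1" t]
    by (intro integral_abs_bound_integral) auto
  also have "\<dots> = B * (LINT x|lborel. \<bar>min (ln \<bar>x\<bar>) 0\<bar>)"
    using lborel_integral_real_affine[of "-1" "\<lambda>x. \<bar>min (ln \<bar>x\<bar>) 0\<bar>" t] by simp
  finally show ?thesis .
qed

lemma asymp_equiv_integral_ln_shift:
  fixes f :: "real \<Rightarrow> real" and B :: real
  assumes [measurable]: "f \<in> borel_measurable borel"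
    and f: "integrable lborel f" and moment: "integrable lborel (\<lambda>y. \<bar>y\<bar> * f y)"
    and bounded: "\<And>y. \<bar>f y\<bar> \<le> B"
    and mass: "(LINT y|lborel. f y) \<noteq> 0"
  shows "(\<lambda>t. LINT y|lborel. f y * ln \<bar>t - y\<bar>) \<sim>[at_infinity] (\<lambda>t. (LINT y|lborel. f y) * ln \<bar>t\<bar>)"
proof -
  define C where "C = (LINT y|lborel. f y)"
  define P where "P t = (LINT y|lborel. f y * max (ln \<bar>t - y\<bar>) 0)" for t
  define N where "N t = (LINT y|lborel. f y * min (ln \<bar>t - y\<bar>) 0)" for t
  \<comment> \<open>The logarithmic singularity at \<open>y = t\<close> sits in \<open>N\<close>, which stays bounded.\<close>
  define K where "K = B * (LINT x|lborel. \<bar>min (ln \<bar>x\<bar>) 0\<bar>)"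
  have "\<bar>N t\<bar> \<le> K" for t
    unfolding N_def K_def by (rule abs_integral_mult_min_ln_shift_le[OF assms(1) bounded])
  then have "N \<in> O[at_infinity](\<lambda>_. 1)"
    by (intro bigoI[of _ K]) simp
  also have "(\<lambda>_. 1) \<in> o[at_infinity](\<lambda>t::real. C * ln \<bar>t\<bar>)"
  proof (rule smalloI_tendsto)
    from tendsto_mult[OF tendsto_const tendsto_inverse_0_at_top[OF filterlim_ln_abs_at_infinity], of "inverse C"]
    show "((\<lambda>t::real. 1 / (C * ln \<bar>t\<bar>)) \<longlongrightarrow> 0) at_infinity"
      by (simp add: field_simps)
    show "\<forall>\<^sub>F t in at_infinity. C * ln \<bar>t::real\<bar> \<noteq> 0"
      using eventually_one_le_ln_abs by eventually_elim (use mass in \<open>simp add: C_def\<close>)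
  qed
  finally have N: "N \<in> o[at_infinity](\<lambda>t. C * ln \<bar>t\<bar>)" .
  have "\<forall>\<^sub>F t in at_infinity. (LINT y|lborel. f y * ln \<bar>t - y\<bar>) = P t + N t"
    using eventually_one_le_ln_abs
  proof eventually_elim
    case (elim t)
    have split: "f y * ln \<bar>t - y\<bar> = f y * max (ln \<bar>t - y\<bar>) 0 + f y * min (ln \<bar>t - y\<bar>) 0" for y
      by (simp add: max_def min_def)
    have "(LINT y|lborel. f y * ln \<bar>t - y\<bar>)
        = (LINT y|lborel. f y * max (ln \<bar>t - y\<bar>) 0 + f y * min (ln \<bar>t - y\<bar>) 0)"
      by (simp only: split)
    also have "\<dots> = P t + N t"
      unfolding P_def N_def using elim
      by (intro Bochner_Integration.integral_add integrable_mult_max_ln_shift[OF assms(1) f moment]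
          integrable_mult_min_ln_shift[OF assms(1) bounded]) simp
    finally show ?case .
  qed
  then have "(\<lambda>t. LINT y|lborel. f y * ln \<bar>t - y\<bar>) \<sim>[at_infinity] (\<lambda>t. C * ln \<bar>t\<bar>)
      \<longleftrightarrow> (\<lambda>t. P t + N t) \<sim>[at_infinity] (\<lambda>t. C * ln \<bar>t\<bar>)"
    by (intro asymp_equiv_cong) auto
  also have "(\<lambda>t. P t + N t) \<sim>[at_infinity] (\<lambda>t. C * ln \<bar>t\<bar>) \<longleftrightarrow> P \<sim>[at_infinity] (\<lambda>t. C * ln \<bar>t\<bar>)"
    by (rule asymp_equiv_add_right[OF N])
  finally show ?thesis
    unfolding C_def P_def using asymp_equiv_integral_max_ln_shift[OF assms(1) f moment mass] by simp
qed

section \<open>Profiles with power-law decay\<close>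

lemma bounded_above_of_continuous_vanishing:
  fixes U :: "real \<Rightarrow> real"
  assumes cont: "continuous_on UNIV U" and vanish: "(U \<longlongrightarrow> 0) at_infinity"
  obtains B where "\<And>x. U x \<le> B"
proof -
  obtain R where R: "\<And>x. R \<le> norm x \<Longrightarrow> U x < 1"
    using order_tendstoD(2)[OF vanish, of 1] unfolding eventually_at_infinity by auto
  have "bounded (U ` cball 0 R)"
    by (intro compact_imp_bounded compact_continuous_image continuous_on_subset[OF cont]) auto
  then obtain M where M: "\<forall>x\<in>cball 0 R. \<bar>U x\<bar> \<le> M"
    unfolding bounded_real by auto
  have "U x \<le> max M 1" for x
  proof (cases "\<bar>x\<bar> \<le> R")
    case True
    then have "\<bar>U x\<bar> \<le> M"
      using M by (simp add: mem_cball_0)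
    then show ?thesis by simp
  next
    case False
    then show ?thesis using R[of x] by simp
  qed
  then show ?thesis
    using that by blast
qed

lemma integrable_abs_mult_square_of_decay:
  fixes U :: "real \<Rightarrow> real" and b q :: real
  assumes [measurable]: "U \<in> borel_measurable borel"
    and U: "integrable lborel U" and U2: "integrable lborel (\<lambda>x. (U x)\<^sup>2)"
    and decay: "U \<sim>[at_infinity] (\<lambda>x. b * \<bar>x\<bar> powr q)" and q: "q \<le> -1"
  shows "integrable lborel (\<lambda>x. \<bar>x\<bar> * (U x)\<^sup>2)"
proof -
  obtain R where R: "\<And>x. R \<le> \<bar>x\<bar> \<Longrightarrow> \<bar>U x\<bar> \<le> 2 * \<bar>b * \<bar>x\<bar> powr q\<bar>"
    using asymp_equiv_imp_eventually_le[OF decay, of 2] unfolding eventually_at_infinity by auto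
  define R' where "R' = max R 1"
  have "\<bar>x\<bar> * (U x)\<^sup>2 \<le> 2 * \<bar>b\<bar> * \<bar>U x\<bar> + R' * (U x)\<^sup>2" for x
  proof (cases "R' \<le> \<bar>x\<bar>")
    case True
    then have x: "1 \<le> \<bar>x\<bar>" "R \<le> \<bar>x\<bar>" by (auto simp: R'_def)
    have "\<bar>x\<bar> * \<bar>x\<bar> powr q \<le> \<bar>x\<bar> * \<bar>x\<bar> powr (-1)"
      using x q by (intro mult_left_mono powr_mono) auto
    also have "\<dots> = 1"
      using x by (simp add: powr_minus)
    finally have "2 * \<bar>b\<bar> * (\<bar>x\<bar> * \<bar>x\<bar> powr q) \<le> 2 * \<bar>b\<bar>"
      by (intro mult_left_le) auto
    moreover have "\<bar>x\<bar> * \<bar>U x\<bar> \<le> 2 * \<bar>b\<bar> * (\<bar>x\<bar> * \<bar>x\<bar> powr q)"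
      using mult_left_mono[OF R[OF x(2)], of "\<bar>x\<bar>"] by (simp add: abs_mult mult_ac)
    ultimately have "\<bar>x\<bar> * \<bar>U x\<bar> \<le> 2 * \<bar>b\<bar>"
      by linarith
    then have "(\<bar>x\<bar> * \<bar>U x\<bar>) * \<bar>U x\<bar> \<le> 2 * \<bar>b\<bar> * \<bar>U x\<bar>"
      by (rule mult_right_mono) simp
    moreover have "\<bar>x\<bar> * (U x)\<^sup>2 = (\<bar>x\<bar> * \<bar>U x\<bar>) * \<bar>U x\<bar>"
      by (metis abs_mult_self_eq mult.assoc power2_eq_square)
    ultimately have "\<bar>x\<bar> * (U x)\<^sup>2 \<le> 2 * \<bar>b\<bar> * \<bar>U x\<bar>"
      by (simp only:)
    then show ?thesis
      by (simp add: R'_def add_increasing2)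
  next
    case False
    then show ?thesis
      by (intro add_increasing mult_right_mono) auto
  qed
  note bound = this
  show ?thesis
  proof (rule Bochner_Integration.integrable_bound)
    show "integrable lborel (\<lambda>x. 2 * \<bar>b\<bar> * \<bar>U x\<bar> + R' * (U x)\<^sup>2)"
      using U U2 by (intro Bochner_Integration.integrable_add integrable_mult_right integrable_abs)
    have "norm (\<bar>x\<bar> * (U x)\<^sup>2) \<le> norm (2 * \<bar>b\<bar> * \<bar>U x\<bar> + R' * (U x)\<^sup>2)" for x
    proof -
      have nonneg: "0 \<le> \<bar>x\<bar> * (U x)\<^sup>2" by simp
      show ?thesis
        unfolding real_norm_def abs_of_nonneg[OF nonneg] abs_of_nonneg[OF order_trans[OF nonneg bound]]
        by (rule bound)
    qed
    then show "AE x in lborel. norm (\<bar>x\<bar> * (U x)\<^sup>2) \<le> norm (2 * \<bar>b\<bar> * \<bar>U x\<bar> + R' * (U x)\<^sup>2)"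
      by (intro AE_I2)
  qed measurable
qed

lemma comparable_of_asymp_equiv_powr:
  fixes U :: "real \<Rightarrow> real" and b q :: real
  assumes decay: "U \<sim>[at_infinity] (\<lambda>x. b * \<bar>x\<bar> powr q)" and b: "0 < b" and q: "q \<le> 0"
  obtains R K where "0 \<le> K" "\<And>t z. R \<le> \<bar>t\<bar> \<Longrightarrow> \<bar>t\<bar> / 2 \<le> \<bar>z\<bar> \<Longrightarrow> \<bar>U z\<bar> \<le> K * \<bar>U t\<bar>"
proof -
  have "\<forall>\<^sub>F x in at_infinity. \<bar>U x\<bar> \<le> 2 * (b * \<bar>x\<bar> powr q) \<and> 1/2 * (b * \<bar>x\<bar> powr q) \<le> \<bar>U x\<bar>"
    using eventually_conj[OF asymp_equiv_imp_eventually_le[OF decay, of 2]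
        asymp_equiv_imp_eventually_ge[OF decay, of "1/2"]] b
    by (simp add: abs_mult)
  then obtain R0 where R0: "\<And>x. R0 \<le> \<bar>x\<bar> \<Longrightarrow>
      \<bar>U x\<bar> \<le> 2 * (b * \<bar>x\<bar> powr q) \<and> 1/2 * (b * \<bar>x\<bar> powr q) \<le> \<bar>U x\<bar>"
    unfolding eventually_at_infinity by auto
  show ?thesis
  proof (rule that[of "4 * 2 powr (- q)" "2 * max R0 1"])
    fix t z :: real
    assume t: "2 * max R0 1 \<le> \<bar>t\<bar>" and z: "\<bar>t\<bar> / 2 \<le> \<bar>z\<bar>"
    have half: "0 < \<bar>t\<bar> / 2" "R0 \<le> \<bar>t\<bar>" "R0 \<le> \<bar>z\<bar>"
      using t z by auto
    have "\<bar>U z\<bar> \<le> 2 * b * \<bar>z\<bar> powr q"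
      using R0[OF half(3)] by simp
    also have "\<dots> \<le> 2 * b * (\<bar>t\<bar> / 2) powr q"
      using b powr_mono2'[OF q half(1) z] by simp
    also have "\<dots> = 4 * 2 powr (- q) * (1/2 * (b * \<bar>t\<bar> powr q))"
      by (simp add: powr_divide powr_minus field_simps)
    also have "\<dots> \<le> 4 * 2 powr (- q) * \<bar>U t\<bar>"
      using R0[OF half(2)] by (intro mult_left_mono) auto
    finally show "\<bar>U z\<bar> \<le> 4 * 2 powr (- q) * \<bar>U t\<bar>" .
  qed simp
qed

lemma asymp_equiv_shift_of_asymp_equiv_powr:
  fixes U :: "real \<Rightarrow> real" and b q y :: real
  assumes decay: "U \<sim>[at_infinity] (\<lambda>x. b * \<bar>x\<bar> powr q)"
  shows "(\<lambda>t. U (t - y)) \<sim>[at_infinity] U"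
proof -
  have "filterlim (\<lambda>t::real. - y + t) at_infinity at_infinity"
    by (rule tendsto_add_filterlim_at_infinity[OF tendsto_const filterlim_ident])
  then have "(\<lambda>t. U (t - y)) \<sim>[at_infinity] (\<lambda>t. b * \<bar>t - y\<bar> powr q)"
    using asymp_equiv_compose'[OF decay] by simp
  also have "(\<lambda>t. b * \<bar>t - y\<bar> powr q) \<sim>[at_infinity] (\<lambda>t. b * \<bar>t\<bar> powr q)"
    by (intro asymp_equiv_mult asymp_equiv_refl asymp_equiv_abs_diff_powr)
  also have "(\<lambda>t. b * \<bar>t\<bar> powr q) \<sim>[at_infinity] U"
    by (rule asymp_equiv_symI[OF decay])
  finally show ?thesis .
qed

lemma asymp_equiv_integral_square_shift:
  fixes U :: "real \<Rightarrow> real" and B b q :: real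
  assumes [measurable]: "U \<in> borel_measurable borel"
    and pos: "\<And>x. 0 < U x" and bounded: "\<And>x. U x \<le> B"
    and U: "integrable lborel U" and U2: "integrable lborel (\<lambda>x. (U x)\<^sup>2)"
    and decay: "U \<sim>[at_infinity] (\<lambda>x. b * \<bar>x\<bar> powr q)" and b: "0 < b" and q: "q \<le> 0"
  shows "(\<lambda>t. LINT y|lborel. (U y)\<^sup>2 * U (t - y)) \<sim>[at_infinity] (\<lambda>t. (LINT y|lborel. (U y)\<^sup>2) * U t)"
proof -
  obtain R K where K: "0 \<le> K" and comparable: "\<And>t z. R \<le> \<bar>t\<bar> \<Longrightarrow> \<bar>t\<bar> / 2 \<le> \<bar>z\<bar> \<Longrightarrow> U z \<le> K * U t"
    using comparable_of_asymp_equiv_powr[OF decay b q] pos by (metis abs_of_pos)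
  show ?thesis
  proof (rule asymp_equiv_integral_shift[where w = "\<lambda>y. K * (U y)\<^sup>2 + K * B * U y"])
    show "integrable lborel (\<lambda>y. K * (U y)\<^sup>2 + K * B * U y)"
      using U U2 by (intro Bochner_Integration.integrable_add integrable_mult_right)
    show "(\<lambda>t. U (t - y)) \<sim>[at_infinity] U" for y
      by (rule asymp_equiv_shift_of_asymp_equiv_powr[OF decay])
    show "\<forall>\<^sub>F t in at_infinity. U t \<noteq> 0"
      using pos by (simp add: less_imp_neq[symmetric])
    show "(LINT y|lborel. (U y)\<^sup>2) \<noteq> 0"
      using integral_lborel_pos[OF U2] pos by (simp add: less_imp_neq[symmetric])
    \<comment> \<open>Near \<open>y = 0\<close> the factor \<open>U (t - y) / U t\<close> is bounded; near \<open>y = t\<close> the factor \<open>U y / U t\<close> is.\<close>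
    have bound: "(U y)\<^sup>2 * (U (t - y) / U t) \<le> K * (U y)\<^sup>2 + K * B * U y" if t: "R \<le> \<bar>t\<bar>" for t y
    proof -
      have B: "0 \<le> B"
        using bounded[of 0] pos[of 0] by linarith
      have U_pos: "0 < U y" "0 < U t" "0 < U (t - y)"
        using pos by auto
      show ?thesis
      proof (cases "\<bar>y\<bar> \<le> \<bar>t\<bar> / 2")
        case True
        then have "\<bar>t\<bar> / 2 \<le> \<bar>t - y\<bar>"
          by linarith
        then have "U (t - y) / U t \<le> K"
          using comparable[OF t, of "t - y"] U_pos by (simp add: divide_le_eq)
        then have "(U y)\<^sup>2 * (U (t - y) / U t) \<le> (U y)\<^sup>2 * K"
          by (rule mult_left_mono) simp
        moreover have "0 \<le> K * B * U y"
          using K B U_pos by simp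
        ultimately show ?thesis
          by (simp add: mult.commute)
      next
        case False
        then have "U y * U (t - y) \<le> (K * U t) * B"
          using comparable[OF t, of y] bounded[of "t - y"] U_pos K by (intro mult_mono) auto
        then have "U y * U (t - y) / U t \<le> K * B"
          using U_pos by (simp add: divide_le_eq mult_ac)
        then have "U y * (U y * U (t - y) / U t) \<le> U y * (K * B)"
          using U_pos by (intro mult_left_mono) auto
        moreover have "0 \<le> K * (U y)\<^sup>2"
          using K by simp
        ultimately show ?thesis
          by (simp add: power2_eq_square mult_ac)
      qed
    qed
    have nonneg: "0 \<le> (U y)\<^sup>2 * (U (t - y) / U t)" for t y
      using pos[of t] pos[of "t - y"] by simp
    show "\<forall>\<^sub>F t in at_infinity. \<forall>y. \<bar>(U y)\<^sup>2 * (U (t - y) / U t)\<bar> \<le> K * (U y)\<^sup>2 + K * B * U y"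
      unfolding eventually_at_infinity real_norm_def abs_of_nonneg[OF nonneg] using bound by blast
  qed (measurable, measurable)
qed

theorem lemma9p1:
  fixes s :: real and U :: "real \<Rightarrow> real"
  assumes s_range: "1/2 \<le> s" "s < 1"
    and cont: "continuous_on UNIV U"
    and pos: "\<forall>x. U x > 0"
    and even: "\<forall>x. U (- x) = U x"
    and sol: "frac_eq_solution s U"
    and vanish: "(U \<longlongrightarrow> 0) at_infinity"
    and decay: "\<exists>b>0. U \<sim>[at_infinity] (\<lambda>x. b * \<bar>x\<bar> powr (- 1 - 2 * s))"
  shows "\<exists>c>0.
     (\<lambda>x. LINT y|lborel. (U \<bar>y\<bar>)\<^sup>2 * U \<bar>x - y\<bar>) \<sim>[at_infinity] (\<lambda>x. c * U \<bar>x\<bar>) \<and>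
     (\<lambda>x. LINT y|lborel. (U \<bar>y\<bar>)\<^sup>2 * \<bar>x - y\<bar> powr (2 * s - 1))
        \<sim>[at_infinity] (\<lambda>x. c * \<bar>x\<bar> powr (2 * s - 1)) \<and>
     (\<lambda>x. LINT y|lborel. (U \<bar>y\<bar>)\<^sup>2 * ln \<bar>x - y\<bar>) \<sim>[at_infinity] (\<lambda>x. c * ln \<bar>x\<bar>)"
proof -
  have U_abs: "U \<bar>x\<bar> = U x" for x
    using even by (cases "0 \<le> x") auto
  have [measurable]: "U \<in> borel_measurable borel"
    using cont by (rule borel_measurable_continuous_onI)
  have U: "integrable lborel U" and U2: "integrable lborel (\<lambda>x. (U x)\<^sup>2)"
    using sol unfolding frac_eq_solution_def by auto
  obtain b where b: "0 < b" and decay: "U \<sim>[at_infinity] (\<lambda>x. b * \<bar>x\<bar> powr (- 1 - 2 * s))"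
    using decay by blast
  obtain B where bounded: "\<And>x. U x \<le> B"
    using bounded_above_of_continuous_vanishing[OF cont vanish] by blast
  define C where "C = (LINT y|lborel. (U y)\<^sup>2)"
  have mass: "0 < C"
    unfolding C_def using pos zero_less_power by (intro integral_lborel_pos[OF U2]) blast
  have moment: "integrable lborel (\<lambda>y. \<bar>y\<bar> * (U y)\<^sup>2)"
    using s_range by (intro integrable_abs_mult_square_of_decay[OF _ U U2 decay]) auto
  have "(\<lambda>x. LINT y|lborel. (U y)\<^sup>2 * U (x - y)) \<sim>[at_infinity] (\<lambda>x. C * U x)"
    unfolding C_def using pos bounded s_range
    by (intro asymp_equiv_integral_square_shift[OF _ _ _ U U2 decay b]) auto
  moreover have "(\<lambda>x. LINT y|lborel. (U y)\<^sup>2 * \<bar>x - y\<bar> powr (2 * s - 1))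
      \<sim>[at_infinity] (\<lambda>x. C * \<bar>x\<bar> powr (2 * s - 1))"
    unfolding C_def using s_range mass
    by (intro asymp_equiv_integral_powr_shift[OF _ U2 moment]) (auto simp: C_def)
  moreover have "(\<lambda>x. LINT y|lborel. (U y)\<^sup>2 * ln \<bar>x - y\<bar>) \<sim>[at_infinity] (\<lambda>x. C * ln \<bar>x\<bar>)"
  proof -
    have "\<bar>(U y)\<^sup>2\<bar> \<le> B\<^sup>2" for y
      using pos bounded[of y] by (simp add: power_mono less_imp_le)
    then show ?thesis
      unfolding C_def using mass
      by (intro asymp_equiv_integral_ln_shift[OF _ U2 moment]) (auto simp: C_def)
  qed
  ultimately show ?thesis
    using mass by (intro exI[of _ C]) (simp add: U_abs)
qed

end
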